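(* Let $G$ be a bipartite quad-graph rhombically embedded in $\mathbb C$ (a cell decomposition of a simply connected planar domain, all faces rhombi with unit sides), with vertex set $V(G)=B\cup W$ of black and white vertices. Let $$f(\alpha)=\frac{\vartheta_1(\alpha/2)}{\vartheta_2(\alpha/2)},\qquad h(\lambda)=\frac{\vartheta_4((\lambda-\lambda_0)/2)}{\vartheta_3((\lambda-\lambda_0)/2)},$$ with constants $\lambda_0$ and a parameter $\lambda$ such that $f(\alpha-\lambda)\neq0$ for all edge directions $\alpha$ of $G$. Fix $v_0\in B$. Then the discrete exponential function $\mathbf e:V(G)\to\mathbb C$ with parameter $\lambda$, normalized by $\mathbf e(v_0)=1$, is given as follows: for any $v\in V(G)$ and any path $v_0,v_1,\dots,v_m=v$ along edges of $G$ with $v_k-v_{k-1}=e^{i\alpha_k}$, $$\mathbf e(v)=i^m\cdot\begin{cases}1,& v\in B,\\ h(\lambda),& v\in W\end{cases}\cdot\prod_{k=1}^m\frac{1}{f(\alpha_k-\lambda)}$$ (in particular this expression does not depend on the choice of the path).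
   Context: Theta functions $\vartheta_k(z)=\vartheta_k(z|\tau)$, $\operatorname{Im}\tau>0$, are as in Whittaker–Watson: with $q^s:=e^{\pi i\tau s}$, $\vartheta_1(z)=2\sum_{n\ge0}(-1)^nq^{(n+1/2)^2}\sin((2n+1)z)$, $\vartheta_2(z)=2\sum_{n\ge0}q^{(n+1/2)^2}\cos((2n+1)z)$, $\vartheta_3(z)=1+2\sum_{n\ge1}q^{n^2}\cos(2nz)$, $\vartheta_4(z)=1+2\sum_{n\ge1}(-1)^nq^{n^2}\cos(2nz)$. With $g(\alpha,\beta)=f(\alpha-\beta)h(\alpha)h(\beta)$ one has the linear quad-equation on a rhombus with black $x_0,x_{12}$, white $x_1,x_2$, $x_1-x_0=e^{i\alpha}$, $x_2-x_0=e^{i\beta}$: $f(\alpha-\beta)x_{12}-g(\alpha,\beta)x_0=i(h(\beta)x_2-h(\alpha)x_1)$ (here $h(\lambda)h(\lambda+\pi)=1$). The discrete exponential function with parameter $\lambda$ is the Bäcklund transform with parameter $\lambda$ of the zero solution: imposing the quad-equation on the "vertical" quads $(b,w,w^+,b^+)$ over each edge, with zero background values, means that $\mathbf e$ satisfies, for every edge joining a black vertex $b$ to a white vertex $w$ with $w-b=e^{i\alpha}$, the relation $f(\alpha-\lambda)\,\mathbf e(w)=i\,h(\lambda)\,\mathbf e(b)$. It is determined by its value at one vertex. *)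

theory Defs
  imports "HOL-Analysis.Analysis"
begin

section \<open>Theta functions (Whittaker--Watson), with q^s = exp(pi i tau s)\<close>

definition qpow :: "complex \<Rightarrow> complex \<Rightarrow> complex" where
  "qpow \<tau> s = exp (complex_of_real pi * \<i> * \<tau> * s)"

definition theta1 :: "complex \<Rightarrow> complex \<Rightarrow> complex" where
  "theta1 \<tau> z = 2 * (\<Sum>n. (-1) ^ n * qpow \<tau> ((of_nat n + 1/2)^2) * sin ((2 * of_nat n + 1) * z))"

definition theta2 :: "complex \<Rightarrow> complex \<Rightarrow> complex" where
  "theta2 \<tau> z = 2 * (\<Sum>n. qpow \<tau> ((of_nat n + 1/2)^2) * cos ((2 * of_nat n + 1) * z))"

definition theta3 :: "complex \<Rightarrow> complex \<Rightarrow> complex" where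
  "theta3 \<tau> z = 1 + 2 * (\<Sum>n. qpow \<tau> ((of_nat n + 1)^2) * cos (2 * (of_nat n + 1) * z))"

definition theta4 :: "complex \<Rightarrow> complex \<Rightarrow> complex" where
  "theta4 \<tau> z = 1 + 2 * (\<Sum>n. (-1) ^ (n + 1) * qpow \<tau> ((of_nat n + 1)^2) * cos (2 * (of_nat n + 1) * z))"

definition fth :: "complex \<Rightarrow> complex \<Rightarrow> complex" where
  "fth \<tau> a = theta1 \<tau> (a / 2) / theta2 \<tau> (a / 2)"

definition hth :: "complex \<Rightarrow> complex \<Rightarrow> complex \<Rightarrow> complex" where
  "hth \<tau> lam0 l = theta4 \<tau> ((l - lam0) / 2) / theta3 \<tau> ((l - lam0) / 2)"

text \<open>Faces are tuples (b,w1,b',w2)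
  (cyclic order b, w1, b', w2) forming a non-degenerate rhombus with unit sides.\<close>

definition face_set :: "complex \<times> complex \<times> complex \<times> complex \<Rightarrow> complex set" where
  "face_set \<phi> = (case \<phi> of (b, w1, b', w2) \<Rightarrow> {b, w1, b', w2})"

definition rhombic_quad_graph ::
  "complex set \<Rightarrow> complex set \<Rightarrow> (complex \<times> complex) set \<Rightarrow> (complex \<times> complex \<times> complex \<times> complex) set \<Rightarrow> bool" where
  "rhombic_quad_graph B W E F \<longleftrightarrow>
     B \<inter> W = {} \<and> E \<subseteq> B \<times> W \<and>
     (\<forall>(b, w) \<in> E. cmod (w - b) = 1) \<and>
     (\<forall>(b, w1, b', w2) \<in> F. (b, w1) \<in> E \<and> (b, w2) \<in> E \<and> (b', w1) \<in> E \<and> (b', w2) \<in> E \<and>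
         w1 - b = b' - w2 \<and> Im ((w1 - b) * cnj (w2 - b)) \<noteq> 0) \<and>
     (\<forall>e \<in> E. \<exists>(b, w1, b', w2) \<in> F. e \<in> {(b, w1), (b, w2), (b', w1), (b', w2)}) \<and>
     (\<forall>\<phi> \<in> F. \<forall>\<psi> \<in> F. face_set \<phi> \<noteq> face_set \<psi> \<longrightarrow>
         interior (convex hull face_set \<phi>) \<inter> interior (convex hull face_set \<psi>) = {}) \<and>
     (\<forall>\<phi> \<in> F. \<forall>v \<in> B \<union> W. v \<notin> interior (convex hull face_set \<phi>)) \<and>
     (\<forall>e \<in> E. \<forall>\<phi> \<in> F. closed_segment (fst e) (snd e) \<inter> interior (convex hull face_set \<phi>) = {}) \<and>
     (\<forall>e1 \<in> E. \<forall>e2 \<in> E. e1 \<noteq> e2 \<longrightarrow>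
         open_segment (fst e1) (snd e1) \<inter> closed_segment (fst e2) (snd e2) = {})"

definition qg_adj :: "(complex \<times> complex) set \<Rightarrow> complex \<Rightarrow> complex \<Rightarrow> bool" where
  "qg_adj E u v \<longleftrightarrow> (u, v) \<in> E \<or> (v, u) \<in> E"

definition qg_path :: "(complex \<times> complex) set \<Rightarrow> complex list \<Rightarrow> bool" where
  "qg_path E vs \<longleftrightarrow> vs \<noteq> [] \<and> (\<forall>k. Suc k < length vs \<longrightarrow> qg_adj E (vs ! k) (vs ! Suc k))"

definition face_opp :: "(complex \<times> complex \<times> complex \<times> complex) set \<Rightarrow> complex \<Rightarrow> complex \<Rightarrow> complex \<Rightarrow> complex \<Rightarrow> bool" where
  "face_opp F a c x y \<longleftrightarrow> (\<exists>(b, w1, b', w2) \<in> F.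
      ({a, c} = {b, b'} \<and> {x, y} = {w1, w2}) \<or> ({a, c} = {w1, w2} \<and> {x, y} = {b, b'}))"

text \<open>Elementary homotopies of edge paths in the 2-complex: removing a backtrack,
  and pushing a path across a face.\<close>
inductive qg_move :: "(complex \<times> complex) set \<Rightarrow> (complex \<times> complex \<times> complex \<times> complex) set \<Rightarrow> complex list \<Rightarrow> complex list \<Rightarrow> bool"
  for E F where
  backtrack: "qg_adj E a x \<Longrightarrow> qg_move E F (xs @ [a, x, a] @ ys) (xs @ [a] @ ys)"
| flip: "face_opp F a c x y \<Longrightarrow> qg_move E F (xs @ [a, x, c] @ ys) (xs @ [a, y, c] @ ys)"

text \<open>Connected and simply connected (combinatorially: every closed edge path is
  null-homotopic in the cell complex).\<close>
definition qg_simply_connected :: "complex set \<Rightarrow> (complex \<times> complex) set \<Rightarrow> (complex \<times> complex \<times> complex \<times> complex) set \<Rightarrow> bool" where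
  "qg_simply_connected V E F \<longleftrightarrow>
     (\<forall>u \<in> V. \<forall>v \<in> V. \<exists>vs. qg_path E vs \<and> hd vs = u \<and> last vs = v) \<and>
     (\<forall>vs. qg_path E vs \<and> hd vs = last vs \<longrightarrow> equivclp (qg_move E F) vs [hd vs])"

definition disc_exp_rel ::
  "complex set \<Rightarrow> complex set \<Rightarrow> (complex \<times> complex) set \<Rightarrow> complex \<Rightarrow> complex \<Rightarrow> complex \<Rightarrow> (complex \<Rightarrow> complex) \<Rightarrow> bool" where
  "disc_exp_rel B W E \<tau> lam0 l e \<longleftrightarrow>
     (\<forall>(b, w) \<in> E. \<forall>\<alpha>::real. w - b = exp (\<i> * of_real \<alpha>) \<longrightarrow>
        fth \<tau> (of_real \<alpha> - l) * e w = \<i> * hth \<tau> lam0 l * e b)"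

end

theory Submission
  imports Defs
begin

(* Along an edge from u to v = u + e^(i alpha), the defining relation says exactly that
   e(v)/c(v) = s(v - u) e(u)/c(u), where c is 1 on black and h(lambda) on white vertices and
   s(e^(i alpha)) = i/f(alpha - lambda); for edges traversed from white to black this uses
   f(alpha) f(alpha + pi) = -1, which comes from the half-period shifts
   theta1(z + pi/2) = theta2(z), theta2(z + pi/2) = -theta1(z).  Hence e/c is the multiplicative
   path integral of s starting at v0.  This integral is path independent: s(d) s(-d) = 1 makes
   backtracks cost nothing, and opposite sides of a rhombus are parallel, so pushing a path across
   a face does not change its weight; by simple connectivity every closed path is reduced to a
   point by such moves.  Uniqueness needs h(lambda) <> 0 to divide by c. *)

lemma summable_theta_majorant:
  fixes t c :: real
  assumes t: "t > 0" and c: "c \<ge> 0"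
  shows "summable (\<lambda>n::nat. exp (- pi * t * (real n + 1/2)^2) * exp ((2 * real n + 1) * c))"
proof (rule summable_comparison_test')
  show "summable (\<lambda>n. exp (-1::real) ^ n)"
    by (simp add: summable_geometric)
  define N where "N = nat \<lceil>(2*c+1) / (pi*t)\<rceil>"
  show "norm (exp (- pi * t * (real n + 1/2)^2) * exp ((2 * real n + 1) * c)) \<le> exp (-1) ^ n"
    if "n \<ge> N" for n
  proof -
    define m where "m = real n + 1/2"
    have "pi * t * real n \<ge> 2*c+1"
      using that t pi_gt_zero unfolding N_def by (simp add: field_simps)
    moreover have "pi * t * m = pi * t * real n + pi * t / 2"
      by (simp add: m_def algebra_simps)
    ultimately have "pi * t * m \<ge> 2*c+1"
      using t pi_gt_zero by (smt (verit) divide_pos_pos mult_pos_pos)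
    then have "pi * t * m * m \<ge> (2*c+1) * m"
      by (rule mult_right_mono) (simp add: m_def)
    then have "- pi * t * m^2 + 2 * m * c \<le> - real n"
      by (simp add: m_def power2_eq_square algebra_simps)
    then have "exp (- pi * t * m^2) * exp (2 * m * c) \<le> exp (- real n)"
      by (simp flip: exp_add)
    then show ?thesis
      by (simp add: m_def exp_of_nat_mult[symmetric] algebra_simps)
  qed
qed

lemma norm_qpow_of_real: "norm (qpow \<tau> (of_real r)) = exp (- pi * Im \<tau> * r)"
  by (simp add: qpow_def norm_exp_eq_Re)

lemma summable_theta1_series:
  assumes "Im \<tau> > 0"
  shows "summable (\<lambda>n. (-1) ^ n * qpow \<tau> ((of_nat n + 1/2)^2) * sin ((2 * of_nat n + 1) * z))"
proof (rule summable_comparison_test'[OF summable_theta_majorant[OF assms abs_ge_zero]])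
  fix n :: nat
  have "qpow \<tau> ((of_nat n + 1/2)^2) = qpow \<tau> (of_real ((real n + 1/2)^2))"
    by simp
  then have "norm ((-1) ^ n * qpow \<tau> ((of_nat n + 1/2)^2) * sin ((2 * of_nat n + 1) * z))
      = exp (- pi * Im \<tau> * (real n + 1/2)^2) * norm (sin ((2 * of_nat n + 1) * z))"
    by (simp only: norm_mult norm_power norm_qpow_of_real norm_minus_cancel norm_one power_one mult_1_left)
  also have "\<dots> \<le> exp (- pi * Im \<tau> * (real n + 1/2)^2) * exp ((2 * real n + 1) * \<bar>Im z\<bar>)"
    using cmod_sin_le_exp[of 1 "(2 * of_nat n + 1) * z"] by (simp add: abs_mult)
  finally show "norm ((-1) ^ n * qpow \<tau> ((of_nat n + 1/2)^2) * sin ((2 * of_nat n + 1) * z))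
      \<le> exp (- pi * Im \<tau> * (real n + 1/2)^2) * exp ((2 * real n + 1) * \<bar>Im z\<bar>)" .
qed

lemma add_half_pi_odd_multiple:
  "(2 * of_nat n + 1) * (z + of_real pi / 2) = (2 * of_nat n + 1) * z + of_nat n * of_real pi + of_real pi / (2::complex)"
  by (simp add: algebra_simps)

lemma theta1_add_half_pi: "theta1 \<tau> (z + of_real pi / 2) = theta2 \<tau> z"
  unfolding theta1_def theta2_def add_half_pi_odd_multiple
  by (simp add: sin_add cos_add mult_ac)

lemma theta2_add_half_pi:
  assumes "Im \<tau> > 0"
  shows "theta2 \<tau> (z + of_real pi / 2) = - theta1 \<tau> z"
proof -
  have "theta2 \<tau> (z + of_real pi / 2)
      = 2 * (\<Sum>n. - ((-1) ^ n * qpow \<tau> ((of_nat n + 1/2)^2) * sin ((2 * of_nat n + 1) * z)))"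
    unfolding theta2_def add_half_pi_odd_multiple by (simp add: sin_add cos_add mult_ac)
  also have "\<dots> = - theta1 \<tau> z"
    unfolding theta1_def suminf_minus[OF summable_theta1_series[OF assms]] by simp
  finally show ?thesis .
qed

(* Any alpha with d = e^(i alpha) would do in place of Arg d, since f is 2 pi-periodic. *)
definition disc_exp_factor :: "complex \<Rightarrow> complex \<Rightarrow> complex \<Rightarrow> complex" where
  "disc_exp_factor \<tau> l d = \<i> / fth \<tau> (of_real (Arg d) - l)"

context
  fixes \<tau> :: complex
  assumes tau: "Im \<tau> > 0"
begin

lemma fth_add_pi: "fth \<tau> (a + of_real pi) = - theta2 \<tau> (a / 2) / theta1 \<tau> (a / 2)"
proof -
  have half: "(a + of_real pi) / 2 = a / 2 + of_real pi / 2"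
    by (simp add: field_simps)
  show ?thesis
    unfolding fth_def half theta1_add_half_pi theta2_add_half_pi[OF tau] by simp
qed

lemma fth_mult_fth_add_pi: "fth \<tau> a \<noteq> 0 \<Longrightarrow> fth \<tau> a * fth \<tau> (a + of_real pi) = -1"
  unfolding fth_add_pi by (simp add: fth_def)

lemma fth_add_2pi: "fth \<tau> (a + 2 * of_real pi) = fth \<tau> a"
proof -
  have half: "(a + 2 * of_real pi) / 2 = (a / 2 + of_real pi / 2) + of_real pi / 2"
    by (simp add: field_simps)
  show ?thesis
    unfolding fth_def half theta1_add_half_pi theta2_add_half_pi[OF tau] by simp
qed

lemma fth_add_int_2pi: "fth \<tau> (a + of_int k * (2 * of_real pi)) = fth \<tau> a"
proof -
  interpret periodic_fun_simple "fth \<tau>" "2 * of_real pi"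
    by standard (rule fth_add_2pi)
  show ?thesis
    by (rule plus_of_int)
qed

lemma disc_exp_factor_exp: "disc_exp_factor \<tau> l (exp (\<i> * of_real \<alpha>)) = \<i> / fth \<tau> (of_real \<alpha> - l)"
proof -
  obtain k :: int where "Arg (exp (\<i> * of_real \<alpha>)) = \<alpha> - of_int k * (2 * pi)"
    using Arg_exp_diff_2pi[of "\<i> * of_real \<alpha>"] by (metis Im_i_times Re_complex_of_real)
  then have "of_real (Arg (exp (\<i> * of_real \<alpha>))) - l = (of_real \<alpha> - l) + of_int (- k) * (2 * of_real pi)"
    by simp
  then show ?thesis
    unfolding disc_exp_factor_def by (simp only: fth_add_int_2pi)
qed

lemma disc_exp_factor_uminus_exp:
  assumes "fth \<tau> (of_real \<alpha> - l) \<noteq> 0"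
  shows "disc_exp_factor \<tau> l (- exp (\<i> * of_real \<alpha>)) = - \<i> * fth \<tau> (of_real \<alpha> - l)"
proof -
  have "- exp (\<i> * of_real \<alpha>) = exp (\<i> * of_real (\<alpha> + pi))"
    by (simp add: distrib_left exp_add)
  then have "disc_exp_factor \<tau> l (- exp (\<i> * of_real \<alpha>)) = \<i> / fth \<tau> (of_real (\<alpha> + pi) - l)"
    by (simp only: disc_exp_factor_exp)
  also have "\<dots> = \<i> / fth \<tau> ((of_real \<alpha> - l) + of_real pi)"
    by (simp add: algebra_simps)
  finally have "disc_exp_factor \<tau> l (- exp (\<i> * of_real \<alpha>)) = \<i> / fth \<tau> ((of_real \<alpha> - l) + of_real pi)" .
  moreover have "fth \<tau> (of_real \<alpha> - l) * fth \<tau> ((of_real \<alpha> - l) + of_real pi) = -1"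
    by (rule fth_mult_fth_add_pi[OF assms])
  moreover have "\<i> / b = - \<i> * a" if "a * b = -1" for a b :: complex
  proof -
    have "b \<noteq> 0"
      using that by auto
    then have "a = - 1 / b"
      using that by (simp add: field_simps)
    then show ?thesis
      by simp
  qed
  ultimately show ?thesis
    by simp
qed

end

fun path_weight :: "('a::ab_group_add \<Rightarrow> 'b::comm_monoid_mult) \<Rightarrow> 'a list \<Rightarrow> 'b" where
  "path_weight s (u # v # vs) = s (v - u) * path_weight s (v # vs)"
| "path_weight s _ = 1"

lemma path_weight_append:
  "path_weight s (xs @ a # ys) = path_weight s (xs @ [a]) * path_weight s (a # ys)"
  by (induction s xs rule: path_weight.induct) (auto simp: mult.assoc)

lemma path_weight_snoc:
  assumes "xs \<noteq> []"
  shows "path_weight s (xs @ [v]) = path_weight s xs * s (v - last xs)"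
proof -
  obtain ys u where "xs = ys @ [u]"
    using assms rev_exhaust by blast
  then show ?thesis
    using path_weight_append[of s ys u "[v]"] by simp
qed

lemma path_weight_conv_prod:
  "path_weight s vs = (\<Prod>k < length vs - 1. s (vs ! Suc k - vs ! k))"
proof (induction s vs rule: path_weight.induct)
  case (1 s u v vs)
  then show ?case
    by (simp add: prod.lessThan_Suc_shift del: prod.lessThan_Suc)
qed simp_all

lemma path_weight_telescope:
  assumes step: "\<And>u v. R u v \<Longrightarrow> \<phi> v = s (v - u) * \<phi> u"
    and "successively R vs" and "vs \<noteq> []"
  shows "\<phi> (last vs) = path_weight s vs * \<phi> (hd vs)"
  using assms(2,3)
proof (induction vs rule: induct_list012)
  case (3 u v vs)
  then have "R u v" and "successively R (v # vs)"
    by simp_all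
  then show ?case
    using "3.IH"(2) step[of u v] by (simp add: mult_ac)
qed simp_all

lemma path_weight_rev:
  assumes inv: "\<And>u v. R u v \<Longrightarrow> s (v - u) * s (u - v) = 1"
    and "successively R vs"
  shows "path_weight s (rev vs) * path_weight s vs = 1"
  using assms(2)
proof (induction vs rule: induct_list012)
  case (3 u v vs)
  have "path_weight s (rev (u # v # vs)) = path_weight s (rev (v # vs)) * s (u - v)"
    using path_weight_snoc[of "rev (v # vs)" s u] by simp
  then have "path_weight s (rev (u # v # vs)) * path_weight s (u # v # vs)
      = (path_weight s (rev (v # vs)) * path_weight s (v # vs)) * (s (v - u) * s (u - v))"
    by (simp add: mult_ac)
  also have "\<dots> = 1"
    using 3 inv[of u v] by simp
  finally show ?case .
qed simp_all

lemma qg_path_iff_successively: "qg_path E vs \<longleftrightarrow> vs \<noteq> [] \<and> successively (qg_adj E) vs"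
  by (simp add: qg_path_def successively_conv_nth)

lemma qg_path_rev:
  assumes "qg_path E vs"
  shows "qg_path E (rev vs)"
proof -
  have flip: "(\<lambda>u v. qg_adj E v u) = qg_adj E"
    by (auto simp: qg_adj_def fun_eq_iff)
  show ?thesis
    using assms unfolding qg_path_iff_successively successively_rev flip by simp
qed

lemma path_weight_qg_move:
  assumes inv: "\<And>u v. qg_adj E u v \<Longrightarrow> s (v - u) * s (u - v) = 1"
    and par: "\<And>a c x y. face_opp F a c x y \<Longrightarrow> a + c = x + y"
    and "qg_move E F xs ys"
  shows "path_weight s xs = path_weight s ys"
  using assms(3)
proof cases
  case (backtrack a x xs' ys')
  then have "path_weight s (a # x # a # ys') = path_weight s (a # ys')"
    using inv[of a x] by (simp flip: mult.assoc)
  then show ?thesis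
    using backtrack path_weight_append[of s xs' a "x # a # ys'"] path_weight_append[of s xs' a ys']
    by simp
next
  case (flip a c x y xs' ys')
  then have "c - x = y - a" "c - y = x - a"
    using par by (simp_all add: algebra_simps)
  then show ?thesis
    using flip path_weight_append[of s xs' a "x # c # ys'"] path_weight_append[of s xs' a "y # c # ys'"]
    by (simp add: mult_ac)
qed

lemma path_weight_equivclp_qg_move:
  assumes "\<And>u v. qg_adj E u v \<Longrightarrow> s (v - u) * s (u - v) = 1"
    and "\<And>a c x y. face_opp F a c x y \<Longrightarrow> a + c = x + y"
    and "equivclp (qg_move E F) xs ys"
  shows "path_weight s xs = path_weight s ys"
  using assms(3)
proof induction
  case (step ys zs)
  then show ?case
    using path_weight_qg_move[where s = s, OF assms(1,2)]
    by auto
qed simp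

lemma path_weight_path_independent:
  assumes sc: "qg_simply_connected V E F"
    and inv: "\<And>u v. qg_adj E u v \<Longrightarrow> s (v - u) * s (u - v) = 1"
    and par: "\<And>a c x y. face_opp F a c x y \<Longrightarrow> a + c = x + y"
    and p: "qg_path E p" and q: "qg_path E q" and "hd p = hd q" and "last p = last q"
  shows "path_weight s p = path_weight s q"
proof -
  obtain p' v where p': "p = p' @ [v]"
    using p by (metis qg_path_iff_successively rev_exhaust)
  obtain q' where q': "q = q' @ [v]"
    using q \<open>last p = last q\<close> p' by (metis qg_path_iff_successively rev_exhaust last_snoc)
  define c where "c = p' @ v # rev q'"
  have "qg_path E (v # rev q')"
    using qg_path_rev[OF q] q' by simp
  then have "qg_path E c"
    using p p' by (auto simp: c_def qg_path_iff_successively successively_append_iff)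
  moreover have "hd c = last c"
    using \<open>hd p = hd q\<close> p' q' by (cases p'; cases q') (auto simp: c_def)
  ultimately have "equivclp (qg_move E F) c [hd c]"
    using sc by (simp add: qg_simply_connected_def)
  then have "path_weight s p * path_weight s (rev q) = 1"
    using path_weight_equivclp_qg_move[where s = s, OF inv par] path_weight_append[of s p' v "rev q'"]
    by (simp add: c_def p' q')
  moreover have "path_weight s (rev q) * path_weight s q = 1"
    using q inv path_weight_rev[of "qg_adj E" s] by (simp add: qg_path_iff_successively)
  ultimately show ?thesis
    by (metis mult.assoc mult_1_left mult_1_right)
qed

lemma rhombic_quad_graph_edge:
  assumes "rhombic_quad_graph B W E F" and "(b, w) \<in> E"
  shows "b \<in> B" and "w \<notin> B" and "cmod (w - b) = 1"
  using assms unfolding rhombic_quad_graph_def by auto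

lemma rhombic_quad_graph_adj_exp_Arg:
  assumes "rhombic_quad_graph B W E F" and "qg_adj E u v"
  shows "v - u = exp (\<i> * of_real (Arg (v - u)))"
proof -
  have "cmod (v - u) = 1"
    using assms rhombic_quad_graph_edge(3)[OF assms(1)] norm_minus_commute[of v u]
    unfolding qg_adj_def by auto
  then show ?thesis
    using Arg_eq[of "v - u"] by (metis mult_1 norm_zero of_real_1 zero_neq_one)
qed

lemma rhombic_quad_graph_face_opp:
  assumes "rhombic_quad_graph B W E F" and "face_opp F a c x y"
  shows "a + c = x + y"
proof -
  obtain b w1 b' w2 where "(b, w1, b', w2) \<in> F"
    and opp: "({a, c} = {b, b'} \<and> {x, y} = {w1, w2}) \<or> ({a, c} = {w1, w2} \<and> {x, y} = {b, b'})"
    using assms(2) unfolding face_opp_def by blast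
  then have "b + b' = w1 + w2"
    using assms(1) unfolding rhombic_quad_graph_def by (force simp: algebra_simps)
  moreover have "p + q = r + t" if "{p, q} = {r, t}" for p q r t :: complex
    using that by (auto simp: doubleton_eq_iff add.commute)
  ultimately show ?thesis
    using opp by metis
qed

locale disc_exp_graph =
  fixes B W E F and \<tau> lam0 l :: complex
  assumes tau: "Im \<tau> > 0"
    and G: "rhombic_quad_graph B W E F"
    and fnz: "\<And>u v (\<alpha>::real). qg_adj E u v \<Longrightarrow> v - u = exp (\<i> * of_real \<alpha>) \<Longrightarrow>
               fth \<tau> (of_real \<alpha> - l) \<noteq> 0"
begin

definition colour :: "complex \<Rightarrow> complex" where
  "colour v = (if v \<in> B then 1 else hth \<tau> lam0 l)"

lemma path_weight_disc_exp_factor: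
  assumes "length \<alpha>s + 1 = length vs"
    and "\<forall>k < length \<alpha>s. vs ! Suc k - vs ! k = exp (\<i> * of_real (\<alpha>s ! k))"
  shows "path_weight (disc_exp_factor \<tau> l) vs
    = \<i> ^ length \<alpha>s * (\<Prod>k < length \<alpha>s. 1 / fth \<tau> (of_real (\<alpha>s ! k) - l))"
proof -
  have "path_weight (disc_exp_factor \<tau> l) vs
      = (\<Prod>k < length \<alpha>s. \<i> * (1 / fth \<tau> (of_real (\<alpha>s ! k) - l)))"
    using assms by (simp add: path_weight_conv_prod disc_exp_factor_exp[OF tau] flip: assms(1))
  also have "\<dots> = \<i> ^ length \<alpha>s * (\<Prod>k < length \<alpha>s. 1 / fth \<tau> (of_real (\<alpha>s ! k) - l))"
    by (simp only: prod.distrib prod_constant card_lessThan)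
  finally show ?thesis .
qed

lemma disc_exp_factor_inverse:
  assumes adj: "qg_adj E u v"
  shows "disc_exp_factor \<tau> l (v - u) * disc_exp_factor \<tau> l (u - v) = 1"
proof -
  define \<alpha> where "\<alpha> = Arg (v - u)"
  have vu: "v - u = exp (\<i> * of_real \<alpha>)"
    unfolding \<alpha>_def by (rule rhombic_quad_graph_adj_exp_Arg[OF G adj])
  then have "u - v = - exp (\<i> * of_real \<alpha>)"
    by (metis minus_diff_eq)
  then show ?thesis
    using vu fnz[OF adj vu] by (simp add: disc_exp_factor_exp[OF tau] disc_exp_factor_uminus_exp[OF tau])
qed

lemma disc_exp_rel_edge_step:
  assumes rel: "disc_exp_rel B W E \<tau> lam0 l e" and adj: "qg_adj E u v"
  shows "colour u * e v = colour v * disc_exp_factor \<tau> l (v - u) * e u"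
  using adj unfolding qg_adj_def
proof
  assume uv: "(u, v) \<in> E"
  define \<alpha> where "\<alpha> = Arg (v - u)"
  have vu: "v - u = exp (\<i> * of_real \<alpha>)"
    unfolding \<alpha>_def by (rule rhombic_quad_graph_adj_exp_Arg[OF G adj])
  have "fth \<tau> (of_real \<alpha> - l) * e v = \<i> * hth \<tau> lam0 l * e u"
    using rel uv vu unfolding disc_exp_rel_def by blast
  then show ?thesis
    using rhombic_quad_graph_edge(1,2)[OF G uv] vu fnz[OF adj vu]
    by (simp add: colour_def disc_exp_factor_exp[OF tau] field_simps)
next
  assume vu_edge: "(v, u) \<in> E"
  then have adj': "qg_adj E v u"
    by (simp add: qg_adj_def)
  define \<beta> where "\<beta> = Arg (u - v)"
  have uv: "u - v = exp (\<i> * of_real \<beta>)"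
    unfolding \<beta>_def by (rule rhombic_quad_graph_adj_exp_Arg[OF G adj'])
  then have "disc_exp_factor \<tau> l (v - u) = - \<i> * fth \<tau> (of_real \<beta> - l)"
    using disc_exp_factor_uminus_exp[OF tau fnz[OF adj' uv]] by (metis minus_diff_eq)
  moreover have "fth \<tau> (of_real \<beta> - l) * e u = \<i> * hth \<tau> lam0 l * e v"
    using rel vu_edge uv unfolding disc_exp_rel_def by blast
  ultimately show ?thesis
    using rhombic_quad_graph_edge(1,2)[OF G vu_edge] by (simp add: colour_def algebra_simps)
qed

lemma disc_exp_relI:
  assumes "\<And>b w. (b, w) \<in> E \<Longrightarrow> e w = hth \<tau> lam0 l * disc_exp_factor \<tau> l (w - b) * e b"
  shows "disc_exp_rel B W E \<tau> lam0 l e"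
  unfolding disc_exp_rel_def
proof (intro ballI allI impI, clarify)
  fix b w \<alpha>
  assume bw: "(b, w) \<in> E" and wb: "w - b = exp (\<i> * of_real \<alpha>)"
  then have "fth \<tau> (of_real \<alpha> - l) \<noteq> 0"
    using fnz[of b w \<alpha>] by (simp add: qg_adj_def)
  then show "fth \<tau> (of_real \<alpha> - l) * e w = \<i> * hth \<tau> lam0 l * e b"
    using assms[OF bw] wb by (simp add: disc_exp_factor_exp[OF tau])
qed

lemma disc_exp_exists:
  assumes sc: "qg_simply_connected (B \<union> W) E F" and v0: "v0 \<in> B"
  shows "\<exists>e. disc_exp_rel B W E \<tau> lam0 l e \<and> e v0 = 1 \<and>
    (\<forall>vs. qg_path E vs \<and> hd vs = v0 \<longrightarrow>
      e (last vs) = colour (last vs) * path_weight (disc_exp_factor \<tau> l) vs)"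
proof -
  let ?s = "disc_exp_factor \<tau> l"
  define P where "P v = (SOME p. qg_path E p \<and> hd p = v0 \<and> last p = v)" for v
  define e where "e v = colour v * path_weight ?s (P v)" for v
  have e_last: "e (last p) = colour (last p) * path_weight ?s p"
    if p: "qg_path E p" "hd p = v0" for p
  proof -
    have "qg_path E (P (last p)) \<and> hd (P (last p)) = v0 \<and> last (P (last p)) = last p"
      unfolding P_def by (rule someI[of _ p]) (use p in simp)
    then have "path_weight ?s (P (last p)) = path_weight ?s p"
      using path_weight_path_independent[where s = ?s, OF sc disc_exp_factor_inverse rhombic_quad_graph_face_opp[OF G]] p
      by metis
    then show ?thesis
      by (simp add: e_def)
  qed
  have "disc_exp_rel B W E \<tau> lam0 l e"
  proof (rule disc_exp_relI)
    fix b w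
    assume bw: "(b, w) \<in> E"
    obtain p where p: "qg_path E p" "hd p = v0" "last p = b"
      using sc v0 rhombic_quad_graph_edge(1)[OF G bw] unfolding qg_simply_connected_def by blast
    then have "p \<noteq> []"
      by (simp add: qg_path_def)
    have "qg_path E (p @ [w])"
      using p bw by (auto simp: qg_path_iff_successively successively_append_iff qg_adj_def)
    then have "e w = hth \<tau> lam0 l * path_weight ?s (p @ [w])"
      using e_last[of "p @ [w]"] p \<open>p \<noteq> []\<close> rhombic_quad_graph_edge(2)[OF G bw]
      by (simp add: colour_def)
    then show "e w = hth \<tau> lam0 l * ?s (w - b) * e b"
      using e_last[OF p(1,2)] p path_weight_snoc[OF \<open>p \<noteq> []\<close>, of ?s w] rhombic_quad_graph_edge(1)[OF G bw]
      by (simp add: colour_def mult_ac)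
  qed
  moreover have "e v0 = 1"
    using e_last[of "[v0]"] v0 by (simp add: qg_path_def colour_def)
  ultimately show ?thesis
    using e_last by blast
qed

lemma disc_exp_unique:
  assumes h: "hth \<tau> lam0 l \<noteq> 0" and v0: "v0 \<in> B"
    and rel: "disc_exp_rel B W E \<tau> lam0 l e" and e0: "e v0 = 1"
    and p: "qg_path E vs" "hd vs = v0"
  shows "e (last vs) = colour (last vs) * path_weight (disc_exp_factor \<tau> l) vs"
proof -
  have colour_nz: "colour v \<noteq> 0" for v
    using h by (simp add: colour_def)
  have "e v / colour v = disc_exp_factor \<tau> l (v - u) * (e u / colour u)" if "qg_adj E u v" for u v
    using disc_exp_rel_edge_step[OF rel that] colour_nz[of u] colour_nz[of v] by (simp add: field_simps)
  then have "e (last vs) / colour (last vs) = path_weight (disc_exp_factor \<tau> l) vs * (e (hd vs) / colour (hd vs))"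
    using p by (intro path_weight_telescope[where R = "qg_adj E"]) (auto simp: qg_path_iff_successively)
  then show ?thesis
    using p(2) e0 v0 colour_nz[of "last vs"] by (simp add: colour_def field_simps)
qed

end

theorem theorem5:
  fixes B W :: "complex set"
    and E :: "(complex \<times> complex) set"
    and F :: "(complex \<times> complex \<times> complex \<times> complex) set"
    and \<tau> lam0 l v0 :: complex
  assumes tau: "Im \<tau> > 0"
    and G: "rhombic_quad_graph B W E F"
    and sc: "qg_simply_connected (B \<union> W) E F"
    and v0: "v0 \<in> B"
    and fnz: "\<And>u v (\<alpha>::real). qg_adj E u v \<Longrightarrow> v - u = exp (\<i> * of_real \<alpha>) \<Longrightarrow>
               fth \<tau> (of_real \<alpha> - l) \<noteq> 0"
  shows "(\<exists>e. disc_exp_rel B W E \<tau> lam0 l e \<and> e v0 = 1 \<and>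
            (\<forall>vs (\<alpha>s::real list). qg_path E vs \<and> hd vs = v0 \<and> length \<alpha>s + 1 = length vs \<and>
               (\<forall>k < length \<alpha>s. vs ! Suc k - vs ! k = exp (\<i> * of_real (\<alpha>s ! k))) \<longrightarrow>
               e (last vs) = \<i> ^ length \<alpha>s * (if last vs \<in> B then 1 else hth \<tau> lam0 l) *
                 (\<Prod>k < length \<alpha>s. 1 / fth \<tau> (of_real (\<alpha>s ! k) - l))))
       \<and> (hth \<tau> lam0 l \<noteq> 0 \<longrightarrow>
          (\<forall>e. disc_exp_rel B W E \<tau> lam0 l e \<and> e v0 = 1 \<longrightarrow>
            (\<forall>vs (\<alpha>s::real list). qg_path E vs \<and> hd vs = v0 \<and> length \<alpha>s + 1 = length vs \<and>
               (\<forall>k < length \<alpha>s. vs ! Suc k - vs ! k = exp (\<i> * of_real (\<alpha>s ! k))) \<longrightarrow>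
               e (last vs) = \<i> ^ length \<alpha>s * (if last vs \<in> B then 1 else hth \<tau> lam0 l) *
                 (\<Prod>k < length \<alpha>s. 1 / fth \<tau> (of_real (\<alpha>s ! k) - l)))))"
proof -
  interpret disc_exp_graph B W E F \<tau> lam0 l
    using tau G fnz by (simp add: disc_exp_graph_def)
  obtain e where "disc_exp_rel B W E \<tau> lam0 l e" "e v0 = 1"
    and e: "\<And>vs. qg_path E vs \<Longrightarrow> hd vs = v0 \<Longrightarrow>
      e (last vs) = colour (last vs) * path_weight (disc_exp_factor \<tau> l) vs"
    using disc_exp_exists[OF sc v0] by blast
  have formula: "e' (last vs) = \<i> ^ length \<alpha>s * (if last vs \<in> B then 1 else hth \<tau> lam0 l) *
      (\<Prod>k < length \<alpha>s. 1 / fth \<tau> (of_real (\<alpha>s ! k) - l))"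
    if "e' (last vs) = colour (last vs) * path_weight (disc_exp_factor \<tau> l) vs"
      and "length \<alpha>s + 1 = length vs"
      and "\<forall>k < length \<alpha>s. vs ! Suc k - vs ! k = exp (\<i> * of_real (\<alpha>s ! k))"
    for e' vs \<alpha>s
    using that(1) path_weight_disc_exp_factor[OF that(2,3)] by (simp add: colour_def mult_ac)
  show ?thesis
    using \<open>disc_exp_rel B W E \<tau> lam0 l e\<close> \<open>e v0 = 1\<close> e disc_exp_unique[OF _ v0] formula
    by blast
qed

end
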